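(* If either $m\ge 3$ and $k\ge 3$, or $m=2$ and $k\ge 4$, then the Spencer operator $\mathcal S^2\colon\operatorname{Hom}(\wedge^2V,\mathfrak a)\to\operatorname{Hom}(\wedge^3V,V)$ is injective.
   Context: $\mathfrak a=\mathfrak{sl}(2,\mathbb R)\times\mathfrak{gl}(m,\mathbb R)$ acting faithfully on $V=V_k\otimes W$, where $V_k=S^k(\mathbb R^2)$ is the irreducible $(k+1)$-dimensional $\mathfrak{sl}(2,\mathbb R)$-module and $W=\mathbb R^m$ the standard $\mathfrak{gl}(m,\mathbb R)$-module. $\mathcal S^2(\phi)(v_1\wedge v_2\wedge v_3)=-\phi(v_2\wedge v_3)v_1+\phi(v_1\wedge v_3)v_2-\phi(v_1\wedge v_2)v_3$. *)

theory Defs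
  imports Complex_Main
begin

text \<open>
V_k = S^k(R^2) has basis the monomials x^(k-i) y^i, i = 0..k; W = R^m has basis e_r, r < m.
An element of V = V_k (x) W is a function v :: nat => nat => real, v i r being the
coefficient of x^(k-i) y^i (x) e_r, vanishing outside i <= k, r < m.
An element of sl(2,R) is a 2x2 matrix X (indices 0,1) of trace zero, an element of gl(m,R)
an m x m matrix A (indices < m); an element of a is the pair (X, A).
\<close>

type_synonym vec = "nat \<Rightarrow> nat \<Rightarrow> real"
type_synonym mat = "nat \<Rightarrow> nat \<Rightarrow> real"
type_synonym alg = "mat \<times> mat"

definition inV :: "nat \<Rightarrow> nat \<Rightarrow> vec \<Rightarrow> bool" where
  "inV k m v \<longleftrightarrow> (\<forall>i r. (k < i \<or> m \<le> r) \<longrightarrow> v i r = 0)"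

definition in_sl2 :: "mat \<Rightarrow> bool" where
  "in_sl2 X \<longleftrightarrow> (\<forall>i j. (1 < i \<or> 1 < j) \<longrightarrow> X i j = 0) \<and> X 0 0 + X 1 1 = 0"

definition in_gl :: "nat \<Rightarrow> mat \<Rightarrow> bool" where
  "in_gl m A \<longleftrightarrow> (\<forall>i j. (m \<le> i \<or> m \<le> j) \<longrightarrow> A i j = 0)"

definition in_alg :: "nat \<Rightarrow> alg \<Rightarrow> bool" where
  "in_alg m xa \<longleftrightarrow> in_sl2 (fst xa) \<and> in_gl m (snd xa)"

definition alg_zero :: alg where
  "alg_zero = ((\<lambda>_ _. 0), (\<lambda>_ _. 0))"

definition vec_zero :: vec where
  "vec_zero = (\<lambda>_ _. 0)"

text \<open>Action of sl(2,R) on V_k = S^k(R^2) (extension as a derivation of the standard action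
X e1 = X00 e1 + X10 e2, X e2 = X01 e1 + X11 e2), tensored with the standard action of gl(m,R).\<close>
definition act :: "nat \<Rightarrow> nat \<Rightarrow> alg \<Rightarrow> vec \<Rightarrow> vec" where
  "act k m xa v = (\<lambda>i r. if i \<le> k \<and> r < m then
       fst xa 0 0 * (real k - 2 * real i) * v i r
     + (if 1 \<le> i then fst xa 1 0 * (real k - real i + 1) * v (i - 1) r else 0)
     + (if i < k then fst xa 0 1 * (real i + 1) * v (i + 1) r else 0)
     + (\<Sum>s<m. snd xa r s * v i s)
     else 0)"

text \<open>Hom(wedge^2 V, a), realised as alternating bilinear maps V x V -> a
(extended by zero outside V x V).\<close>
definition Hom2 :: "nat \<Rightarrow> nat \<Rightarrow> (vec \<Rightarrow> vec \<Rightarrow> alg) set" where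
  "Hom2 k m = {\<phi>.
     (\<forall>v w. inV k m v \<and> inV k m w \<longrightarrow> in_alg m (\<phi> v w)) \<and>
     (\<forall>v w. \<not> (inV k m v \<and> inV k m w) \<longrightarrow> \<phi> v w = alg_zero) \<and>
     (\<forall>v w u c. inV k m v \<and> inV k m w \<and> inV k m u \<longrightarrow>
        \<phi> (\<lambda>i r. c * v i r + w i r) u =
          ((\<lambda>i j. c * fst (\<phi> v u) i j + fst (\<phi> w u) i j),
           (\<lambda>i j. c * snd (\<phi> v u) i j + snd (\<phi> w u) i j))) \<and>
     (\<forall>v w u c. inV k m v \<and> inV k m w \<and> inV k m u \<longrightarrow>
        \<phi> u (\<lambda>i r. c * v i r + w i r) =
          ((\<lambda>i j. c * fst (\<phi> u v) i j + fst (\<phi> u w) i j),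
           (\<lambda>i j. c * snd (\<phi> u v) i j + snd (\<phi> u w) i j))) \<and>
     (\<forall>v. inV k m v \<longrightarrow> \<phi> v v = alg_zero)}"

definition S2 :: "nat \<Rightarrow> nat \<Rightarrow> (vec \<Rightarrow> vec \<Rightarrow> alg) \<Rightarrow> vec \<Rightarrow> vec \<Rightarrow> vec \<Rightarrow> vec" where
  "S2 k m \<phi> v1 v2 v3 =
     (if inV k m v1 \<and> inV k m v2 \<and> inV k m v3 then
        (\<lambda>i r. - act k m (\<phi> v2 v3) v1 i r + act k m (\<phi> v1 v3) v2 i r
               - act k m (\<phi> v1 v2) v3 i r)
      else vec_zero)"

end

theory Submission
  imports Defs
begin

text \<open>
It suffices to show that an alternating bilinear \<open>G : \<wedge>\<^sup>2V \<rightarrow> \<fraka>\<close> with \<open>\<S>\<^sup>2 G = 0\<close> vanishes,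
and by bilinearity only its values \<open>G(e\<^sub>i\<^sub>a, e\<^sub>j\<^sub>b)\<close> on the weight basis \<open>e\<^sub>i\<^sub>a = x\<^sup>k\<^sup>-\<^sup>i y\<^sup>i \<otimes> e\<^sub>a\<close>
matter. Evaluating \<open>\<S>\<^sup>2 G(e\<^sub>i\<^sub>a, e\<^sub>j\<^sub>b, e\<^sub>l\<^sub>c)\<close> at a coordinate \<open>e\<^sub>i\<^sub>'\<^sub>r\<^sub>'\<close> to which only the third
term \<open>G(e\<^sub>i\<^sub>a, e\<^sub>j\<^sub>b) e\<^sub>l\<^sub>c\<close> can contribute isolates one coefficient of \<open>G(e\<^sub>i\<^sub>a, e\<^sub>j\<^sub>b)\<close>:
the coordinate \<open>(l+1, c)\<close> isolates the lowering part, \<open>(l-1, c)\<close> the raising part, and once these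
vanish everywhere, the coordinates \<open>(l, d)\<close> with \<open>l \<noteq> i, j\<close> give
\<open>\<delta>\<^sub>c\<^sub>d h (k - 2l) + A\<^sub>d\<^sub>c = 0\<close>; two different such \<open>l\<close> kill the Cartan part \<open>h\<close> and then \<open>A\<close>.
Choosing \<open>l\<close> and \<open>c\<close> so that the two other terms cannot interfere needs either a third colour
\<open>c \<notin> {a, b}\<close> (\<open>m \<ge> 3\<close>, \<open>k \<ge> 3\<close>) or, for \<open>m = 2\<close>, enough room in the weights (\<open>k \<ge> 4\<close>).
\<close>

definition basis_vec :: "nat \<Rightarrow> nat \<Rightarrow> vec" where
  "basis_vec l c = (\<lambda>i r. if i = l \<and> r = c then 1 else 0)"

lemma inV_basis_vec: "l \<le> k \<Longrightarrow> c < m \<Longrightarrow> inV k m (basis_vec l c)"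
  unfolding inV_def basis_vec_def by auto

lemma act_basis_vec:
  assumes "l \<le> k" "c < m"
  shows "act k m xa (basis_vec l c) i r = (if i \<le> k \<and> r < m then
     (if i = l \<and> r = c then fst xa 0 0 * (real k - 2 * real i) else 0)
   + (if i = l + 1 \<and> r = c then fst xa 1 0 * (real k - real l) else 0)
   + (if i + 1 = l \<and> r = c then fst xa 0 1 * real l else 0)
   + (if i = l then snd xa r c else 0) else 0)"
proof -
  have "(\<Sum>s<m. snd xa r s * basis_vec l c i s) = (if i = l then snd xa r c else 0)"
    using \<open>c < m\<close> unfolding basis_vec_def
    by (simp add: if_distrib[of "\<lambda>x. _ * x"] sum.delta cong: if_cong)
  then show ?thesis
    using assms unfolding act_def by (auto simp: basis_vec_def)
qed

definition alg_diff :: "alg \<Rightarrow> alg \<Rightarrow> alg" where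
  "alg_diff p q = ((\<lambda>x y. fst p x y - fst q x y), (\<lambda>x y. snd p x y - snd q x y))"

lemma act_alg_diff: "act k m (alg_diff p q) v i r = act k m p v i r - act k m q v i r"
  unfolding act_def alg_diff_def by (simp add: algebra_simps sum_subtractf)

lemma in_alg_diff: "in_alg m p \<Longrightarrow> in_alg m q \<Longrightarrow> in_alg m (alg_diff p q)"
  unfolding alg_diff_def in_alg_def in_sl2_def in_gl_def by auto

lemma alg_diff_eq_zero_iff: "alg_diff p q = alg_zero \<longleftrightarrow> p = q"
  unfolding alg_diff_def alg_zero_def by (auto simp: prod_eq_iff fun_eq_iff)

lemma alg_eq_zeroI:
  assumes "in_alg m x" "fst x 0 0 = 0" "fst x 1 0 = 0" "fst x 0 1 = 0"
    and "\<And>c d. c < m \<Longrightarrow> d < m \<Longrightarrow> snd x d c = 0"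
  shows "x = alg_zero"
proof -
  have "fst x i j = 0" for i j
    using assms(1-4) unfolding in_alg_def in_sl2_def
    by (cases "i \<le> 1 \<and> j \<le> 1") (auto simp: le_Suc_eq)
  moreover have "snd x d c = 0" for c d
    using assms(1,5) unfolding in_alg_def in_gl_def by (cases "c < m \<and> d < m") auto
  ultimately show ?thesis
    unfolding alg_zero_def by (simp add: prod_eq_iff fun_eq_iff)
qed

text \<open>\<open>G i a j b\<close> stands for the value of a cochain on \<open>e\<^sub>i\<^sub>a \<and> e\<^sub>j\<^sub>b\<close>; the condition says that its
Spencer image vanishes on all basis triples (with the overall sign of \<open>\<S>\<^sup>2\<close> reversed).\<close>
definition S2_vanishes_on_basis :: "nat \<Rightarrow> nat \<Rightarrow> (nat \<Rightarrow> nat \<Rightarrow> nat \<Rightarrow> nat \<Rightarrow> alg) \<Rightarrow> bool" where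
  "S2_vanishes_on_basis k m G \<longleftrightarrow>
    (\<forall>i a j b l c i' r'. i \<le> k \<longrightarrow> a < m \<longrightarrow> j \<le> k \<longrightarrow> b < m \<longrightarrow> l \<le> k \<longrightarrow> c < m \<longrightarrow>
      act k m (G j b l c) (basis_vec i a) i' r' - act k m (G i a l c) (basis_vec j b) i' r'
      + act k m (G i a j b) (basis_vec l c) i' r' = 0)"

lemma S2_vanishes_on_basis_lowering:
  assumes G: "S2_vanishes_on_basis k m G"
    and "i \<le> k" "j \<le> k" "a < m" "b < m" "c < m" "l < k" "l + 1 \<noteq> i" "l + 1 \<noteq> j"
    and "c = a \<longrightarrow> l \<noteq> i \<and> l + 2 \<noteq> i" "c = b \<longrightarrow> l \<noteq> j \<and> l + 2 \<noteq> j"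
  shows "fst (G i a j b) 1 0 = 0"
proof -
  have "act k m (G j b l c) (basis_vec i a) (l + 1) c - act k m (G i a l c) (basis_vec j b) (l + 1) c
      + act k m (G i a j b) (basis_vec l c) (l + 1) c = 0"
    using G assms unfolding S2_vanishes_on_basis_def by auto
  then have "fst (G i a j b) 1 0 * (real k - real l) = 0"
    using assms by (auto simp: act_basis_vec)
  then show ?thesis using \<open>l < k\<close> by auto
qed

lemma S2_vanishes_on_basis_raising:
  assumes G: "S2_vanishes_on_basis k m G"
    and "i \<le> k" "j \<le> k" "a < m" "b < m" "c < m" "n < k" "n \<noteq> i" "n \<noteq> j"
    and "c = a \<longrightarrow> n \<noteq> i + 1 \<and> n + 1 \<noteq> i" "c = b \<longrightarrow> n \<noteq> j + 1 \<and> n + 1 \<noteq> j"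
  shows "fst (G i a j b) 0 1 = 0"
proof -
  have "act k m (G j b (n + 1) c) (basis_vec i a) n c - act k m (G i a (n + 1) c) (basis_vec j b) n c
      + act k m (G i a j b) (basis_vec (n + 1) c) n c = 0"
    using G assms unfolding S2_vanishes_on_basis_def by auto
  then have "fst (G i a j b) 0 1 * (real n + 1) = 0"
    using assms by (auto simp: act_basis_vec)
  then show ?thesis by (auto simp: add_nonneg_eq_0_iff)
qed

lemma S2_vanishes_on_basis_weight:
  assumes G: "S2_vanishes_on_basis k m G"
    and "i \<le> k" "j \<le> k" "a < m" "b < m" "c < m" "d < m" "l \<le> k" "l \<noteq> i" "l \<noteq> j"
    and off_diagonal: "\<And>i a j b. i \<le> k \<Longrightarrow> j \<le> k \<Longrightarrow> a < m \<Longrightarrow> b < m \<Longrightarrow>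
      fst (G i a j b) 1 0 = 0 \<and> fst (G i a j b) 0 1 = 0"
  shows "(if d = c then fst (G i a j b) 0 0 * (real k - 2 * real l) else 0) + snd (G i a j b) d c = 0"
proof -
  have "act k m (G j b l c) (basis_vec i a) l d - act k m (G i a l c) (basis_vec j b) l d
      + act k m (G i a j b) (basis_vec l c) l d = 0"
    using G assms unfolding S2_vanishes_on_basis_def by auto
  moreover have "fst (G j b l c) 1 0 = 0" "fst (G j b l c) 0 1 = 0"
    "fst (G i a l c) 1 0 = 0" "fst (G i a l c) 0 1 = 0"
    using off_diagonal assms by auto
  ultimately show ?thesis
    using assms by (simp add: act_basis_vec split: if_splits)
qed

lemma third_colour_or_room:
  "(3 \<le> m \<and> 3 \<le> k) \<or> (m = 2 \<and> 4 \<le> k) \<Longrightarrow> a < (m::nat) \<Longrightarrow> b < m \<Longrightarrow>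
    (\<exists>c<m. c \<noteq> a \<and> c \<noteq> b) \<or> (a \<noteq> b \<and> 4 \<le> (k::nat))"
  by presburger

lemma lowering_witness:
  fixes k m :: nat
  assumes km: "(3 \<le> m \<and> 3 \<le> k) \<or> (m = 2 \<and> 4 \<le> k)" and "a < m" "b < m"
  shows "\<exists>c<m. \<exists>l<k. l + 1 \<noteq> i \<and> l + 1 \<noteq> j \<and>
    (c = a \<longrightarrow> l \<noteq> i \<and> l + 2 \<noteq> i) \<and> (c = b \<longrightarrow> l \<noteq> j \<and> l + 2 \<noteq> j)"
proof -
  have "3 \<le> k" using km by auto
  from third_colour_or_room[OF assms] show ?thesis
  proof
    assume "\<exists>c<m. c \<noteq> a \<and> c \<noteq> b"
    moreover from \<open>3 \<le> k\<close> have "\<exists>l<k. l + 1 \<noteq> i \<and> l + 1 \<noteq> j" by presburger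
    ultimately show ?thesis by blast
  next
    assume "a \<noteq> b \<and> 4 \<le> k"
    then have "\<exists>l<k. l + 1 \<noteq> i \<and> l + 1 \<noteq> j \<and> ((l \<noteq> i \<and> l + 2 \<noteq> i) \<or> (l \<noteq> j \<and> l + 2 \<noteq> j))"
      by presburger
    then show ?thesis using \<open>a \<noteq> b \<and> 4 \<le> k\<close> assms(2,3) by metis
  qed
qed

lemma raising_witness:
  fixes k m :: nat
  assumes km: "(3 \<le> m \<and> 3 \<le> k) \<or> (m = 2 \<and> 4 \<le> k)" and "a < m" "b < m"
  shows "\<exists>c<m. \<exists>n<k. n \<noteq> i \<and> n \<noteq> j \<and>
    (c = a \<longrightarrow> n \<noteq> i + 1 \<and> n + 1 \<noteq> i) \<and> (c = b \<longrightarrow> n \<noteq> j + 1 \<and> n + 1 \<noteq> j)"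
proof -
  have "3 \<le> k" using km by auto
  from third_colour_or_room[OF assms] show ?thesis
  proof
    assume "\<exists>c<m. c \<noteq> a \<and> c \<noteq> b"
    moreover from \<open>3 \<le> k\<close> have "\<exists>n<k. n \<noteq> i \<and> n \<noteq> j" by presburger
    ultimately show ?thesis by blast
  next
    assume "a \<noteq> b \<and> 4 \<le> k"
    then have "\<exists>n<k. n \<noteq> i \<and> n \<noteq> j \<and> ((n \<noteq> i + 1 \<and> n + 1 \<noteq> i) \<or> (n \<noteq> j + 1 \<and> n + 1 \<noteq> j))"
      by presburger
    then show ?thesis using \<open>a \<noteq> b \<and> 4 \<le> k\<close> assms(2,3) by metis
  qed
qed

lemma S2_vanishes_on_basis_imp_zero:
  assumes G: "S2_vanishes_on_basis k m G" and km: "(3 \<le> m \<and> 3 \<le> k) \<or> (m = 2 \<and> 4 \<le> k)"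
    and in_alg: "\<And>i a j b. i \<le> k \<Longrightarrow> j \<le> k \<Longrightarrow> a < m \<Longrightarrow> b < m \<Longrightarrow> in_alg m (G i a j b)"
    and "i \<le> k" "j \<le> k" "a < m" "b < m"
  shows "G i a j b = alg_zero"
proof -
  have off_diagonal: "fst (G i a j b) 1 0 = 0 \<and> fst (G i a j b) 0 1 = 0"
    if "i \<le> k" "j \<le> k" "a < m" "b < m" for i a j b
  proof
    obtain c l where "c < m" "l < k" "l + 1 \<noteq> i" "l + 1 \<noteq> j"
      "c = a \<longrightarrow> l \<noteq> i \<and> l + 2 \<noteq> i" "c = b \<longrightarrow> l \<noteq> j \<and> l + 2 \<noteq> j"
      using lowering_witness[OF km \<open>a < m\<close> \<open>b < m\<close>] by blast
    then show "fst (G i a j b) 1 0 = 0"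
      by (rule S2_vanishes_on_basis_lowering[OF G that])
    obtain c n where "c < m" "n < k" "n \<noteq> i" "n \<noteq> j"
      "c = a \<longrightarrow> n \<noteq> i + 1 \<and> n + 1 \<noteq> i" "c = b \<longrightarrow> n \<noteq> j + 1 \<and> n + 1 \<noteq> j"
      using raising_witness[OF km \<open>a < m\<close> \<open>b < m\<close>] by blast
    then show "fst (G i a j b) 0 1 = 0"
      by (rule S2_vanishes_on_basis_raising[OF G that])
  qed
  have weight: "(if d = c then fst (G i a j b) 0 0 * (real k - 2 * real l) else 0)
      + snd (G i a j b) d c = 0"
    if "c < m" "d < m" "l \<le> k" "l \<noteq> i" "l \<noteq> j" for c d l
    using S2_vanishes_on_basis_weight[OF G assms(4-7) that off_diagonal] .
  have "3 \<le> k" using km by auto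
  then have "\<exists>l1 l2. l1 \<le> k \<and> l2 \<le> k \<and> l1 \<noteq> l2 \<and> l1 \<noteq> i \<and> l1 \<noteq> j \<and> l2 \<noteq> i \<and> l2 \<noteq> j"
    by presburger
  then obtain l1 l2 where l12: "l1 \<le> k" "l2 \<le> k" "l1 \<noteq> l2" "l1 \<noteq> i" "l1 \<noteq> j" "l2 \<noteq> i" "l2 \<noteq> j"
    by blast
  have diagonal: "fst (G i a j b) 0 0 * (real k - 2 * real l) + snd (G i a j b) 0 0 = 0"
    if "l \<le> k" "l \<noteq> i" "l \<noteq> j" for l
    using weight[of 0 0 l] that \<open>a < m\<close> by simp
  have "fst (G i a j b) 0 0 * (real k - 2 * real l1) = fst (G i a j b) 0 0 * (real k - 2 * real l2)"
    using diagonal[OF l12(1,4,5)] diagonal[OF l12(2,6,7)] by linarith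
  then have "fst (G i a j b) 0 0 * (2 * real l2 - 2 * real l1) = 0"
    by (simp add: algebra_simps)
  then have cartan: "fst (G i a j b) 0 0 = 0"
    using \<open>l1 \<noteq> l2\<close> by simp
  have gl: "snd (G i a j b) d c = 0" if "c < m" "d < m" for c d
    using weight[OF that l12(1,4,5)] cartan by (auto split: if_splits)
  show ?thesis
    using alg_eq_zeroI[OF in_alg[OF assms(4-7)] cartan _ _ gl] off_diagonal[OF assms(4-7)] by blast
qed

lemma S2_eq_imp_vanishes_on_basis:
  assumes "S2 k m \<phi> = S2 k m \<psi>"
  shows "S2_vanishes_on_basis k m
    (\<lambda>i a j b. alg_diff (\<phi> (basis_vec i a) (basis_vec j b)) (\<psi> (basis_vec i a) (basis_vec j b)))"
  unfolding S2_vanishes_on_basis_def act_alg_diff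
proof (intro allI impI)
  fix i a j b l c i' r'
  assume "i \<le> k" "a < m" "j \<le> k" "b < m" "l \<le> k" "c < m"
  then have "S2 k m \<phi> (basis_vec i a) (basis_vec j b) (basis_vec l c) i' r'
      = S2 k m \<psi> (basis_vec i a) (basis_vec j b) (basis_vec l c) i' r'"
    and "inV k m (basis_vec i a)" "inV k m (basis_vec j b)" "inV k m (basis_vec l c)"
    using assms by (simp_all add: inV_basis_vec)
  then show "act k m (\<phi> (basis_vec j b) (basis_vec l c)) (basis_vec i a) i' r'
      - act k m (\<psi> (basis_vec j b) (basis_vec l c)) (basis_vec i a) i' r'
    - (act k m (\<phi> (basis_vec i a) (basis_vec l c)) (basis_vec j b) i' r'
      - act k m (\<psi> (basis_vec i a) (basis_vec l c)) (basis_vec j b) i' r')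
    + (act k m (\<phi> (basis_vec i a) (basis_vec j b)) (basis_vec l c) i' r'
      - act k m (\<psi> (basis_vec i a) (basis_vec j b)) (basis_vec l c) i' r') = 0"
    unfolding S2_def by simp
qed

lemma inV_induct [consumes 2, case_names basis lincomb]:
  assumes "0 < m" and v: "inV k m v"
    and basis: "\<And>l c. l \<le> k \<Longrightarrow> c < m \<Longrightarrow> P (basis_vec l c)"
    and lincomb: "\<And>v w c. inV k m v \<Longrightarrow> inV k m w \<Longrightarrow> P v \<Longrightarrow> P w \<Longrightarrow> P (\<lambda>i r. c * v i r + w i r)"
  shows "P v"
proof -
  have "P (\<lambda>i r. 0)"
  proof -
    have "inV k m (basis_vec 0 0)" "P (basis_vec 0 0)"
      using inV_basis_vec basis \<open>0 < m\<close> by auto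
    then have "P (\<lambda>i r. (-1) * basis_vec 0 0 i r + basis_vec 0 0 i r)"
      using lincomb by blast
    then show ?thesis by simp
  qed
  have restriction: "P (\<lambda>i r. if (i, r) \<in> S then v i r else 0)"
    if "finite S" "S \<subseteq> {..k} \<times> {..<m}" for S
    using that
  proof (induction S rule: finite_induct)
    case empty
    then show ?case using \<open>P (\<lambda>i r. 0)\<close> by simp
  next
    case (insert p S)
    obtain l c where p: "p = (l, c)" "l \<le> k" "c < m"
      using insert.prems by (cases p) auto
    have "inV k m (\<lambda>i r. if (i, r) \<in> S then v i r else 0)"
      using insert.prems unfolding inV_def by auto
    then have "P (\<lambda>i r. v l c * basis_vec l c i r + (if (i, r) \<in> S then v i r else 0))"
      using lincomb inV_basis_vec basis insert p by simp
    moreover have "(\<lambda>i r. v l c * basis_vec l c i r + (if (i, r) \<in> S then v i r else 0)) =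
        (\<lambda>i r. if (i, r) \<in> insert p S then v i r else 0)"
      using insert p by (auto simp: basis_vec_def fun_eq_iff)
    ultimately show ?case by simp
  qed
  have "(\<lambda>i r. if (i, r) \<in> {..k} \<times> {..<m} then v i r else 0) = v"
    using v unfolding inV_def by (auto simp: fun_eq_iff not_le)
  then show ?thesis
    using restriction[of "{..k} \<times> {..<m}"] by simp
qed

lemma Hom2_zero_outside:
  "\<phi> \<in> Hom2 k m \<Longrightarrow> \<not> (inV k m v \<and> inV k m w) \<Longrightarrow> \<phi> v w = alg_zero"
  unfolding Hom2_def by blast

lemma Hom2_linear_left:
  "\<phi> \<in> Hom2 k m \<Longrightarrow> inV k m v \<Longrightarrow> inV k m w \<Longrightarrow> inV k m u \<Longrightarrow>
    \<phi> (\<lambda>i r. c * v i r + w i r) u =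
      ((\<lambda>i j. c * fst (\<phi> v u) i j + fst (\<phi> w u) i j),
       (\<lambda>i j. c * snd (\<phi> v u) i j + snd (\<phi> w u) i j))"
  unfolding Hom2_def by blast

lemma Hom2_linear_right:
  "\<phi> \<in> Hom2 k m \<Longrightarrow> inV k m v \<Longrightarrow> inV k m w \<Longrightarrow> inV k m u \<Longrightarrow>
    \<phi> u (\<lambda>i r. c * v i r + w i r) =
      ((\<lambda>i j. c * fst (\<phi> u v) i j + fst (\<phi> u w) i j),
       (\<lambda>i j. c * snd (\<phi> u v) i j + snd (\<phi> u w) i j))"
  unfolding Hom2_def by blast

lemma Hom2_eq_on_basis:
  assumes "\<phi> \<in> Hom2 k m" "\<psi> \<in> Hom2 k m" "0 < m"
    and basis: "\<And>i a j b. i \<le> k \<Longrightarrow> a < m \<Longrightarrow> j \<le> k \<Longrightarrow> b < m \<Longrightarrow>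
      \<phi> (basis_vec i a) (basis_vec j b) = \<psi> (basis_vec i a) (basis_vec j b)"
  shows "\<phi> = \<psi>"
proof -
  have on_basis_right: "\<phi> v (basis_vec j b) = \<psi> v (basis_vec j b)"
    if "inV k m v" "j \<le> k" "b < m" for v j b
    using \<open>0 < m\<close> \<open>inV k m v\<close>
  proof (induction v rule: inV_induct)
    case (basis l c)
    then show ?case using assms(4) that by blast
  next
    case (lincomb v w c)
    then show ?case
      using assms(1,2) inV_basis_vec[OF that(2,3)] by (simp add: Hom2_linear_left)
  qed
  have on_V: "\<phi> v w = \<psi> v w" if "inV k m v" "inV k m w" for v w
    using \<open>0 < m\<close> \<open>inV k m w\<close>
  proof (induction w rule: inV_induct)
    case (basis l c)
    then show ?case using on_basis_right that by blast
  next
    case (lincomb w u c)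
    then show ?case
      using assms(1,2) \<open>inV k m v\<close> by (simp add: Hom2_linear_right)
  qed
  show ?thesis
  proof (intro ext)
    fix v w
    show "\<phi> v w = \<psi> v w"
      using on_V Hom2_zero_outside[OF assms(1)] Hom2_zero_outside[OF assms(2)] by metis
  qed
qed

theorem lemma4:
  fixes k m :: nat
  assumes "(3 \<le> m \<and> 3 \<le> k) \<or> (m = 2 \<and> 4 \<le> k)"
  shows "inj_on (S2 k m) (Hom2 k m)"
proof (rule inj_onI)
  fix \<phi> \<psi> assume "\<phi> \<in> Hom2 k m" "\<psi> \<in> Hom2 k m" "S2 k m \<phi> = S2 k m \<psi>"
  define G where "G i a j b =
    alg_diff (\<phi> (basis_vec i a) (basis_vec j b)) (\<psi> (basis_vec i a) (basis_vec j b))" for i a j b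
  have "S2_vanishes_on_basis k m G"
    unfolding G_def using S2_eq_imp_vanishes_on_basis[OF \<open>S2 k m \<phi> = S2 k m \<psi>\<close>] .
  moreover have "in_alg m (G i a j b)" if "i \<le> k" "j \<le> k" "a < m" "b < m" for i a j b
    using \<open>\<phi> \<in> Hom2 k m\<close> \<open>\<psi> \<in> Hom2 k m\<close> that
    unfolding G_def Hom2_def by (simp add: in_alg_diff inV_basis_vec)
  ultimately have "G i a j b = alg_zero" if "i \<le> k" "j \<le> k" "a < m" "b < m" for i a j b
    using S2_vanishes_on_basis_imp_zero assms that by blast
  moreover have "0 < m" using assms by auto
  ultimately show "\<phi> = \<psi>"
    using Hom2_eq_on_basis[OF \<open>\<phi> \<in> Hom2 k m\<close> \<open>\<psi> \<in> Hom2 k m\<close>] assms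
    by (simp add: G_def alg_diff_eq_zero_iff)
qed

end
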